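(* Let $(G,\sigma)$ be a finite connected signed graph satisfying $CD_{p}^{\sigma}(K,N)$ with $p\geq2$, $N>1$ and $K>0$. Then the first (smallest) nonzero eigenvalue $\lambda_p^\sigma$ of $\Delta_p^\sigma$ satisfies \[ \lambda_{p}^{\sigma}\geq\left(\frac{1}{\mathrm{vol}(G)}\right)^{\frac{p-2}{2}}\left(\frac{NK}{N-1}\right)^{\frac{p}{2}}, \] where $\mathrm{vol}(G)=\sum_{x\in V}d_x$.
   Context: $G=(V,E)$ is a finite simple connected graph with degrees $d_x$; $\sigma:E\to\{\pm1\}$, $\sigma_{xy}=\sigma(\{x,y\})$. For $p>1$: $\Delta_{p}^{\sigma}f(x)=\frac{1}{d_{x}}\sum_{y\sim x}|\sigma_{xy}f(y)-f(x)|^{p-2}(\sigma_{xy}f(y)-f(x))$ (with $|t|^{p-2}t=0$ at $t=0$); eigenvalue $\lambda$: $-\Delta_{p}^{\sigma}f=\lambda|f|^{p-2}f$ for some nonzero $f$. $\Gamma_p^\sigma(f,g)(x)=\frac{1}{2d_{x}}\sum_{y\sim x}|\sigma_{xy}f(y)-f(x)|^{p-2}(\sigma_{xy}f(y)-f(x))(\sigma_{xy}g(y)-g(x))$; $\mathscr{L}^\sigma_{p,f}\varphi(x)=\frac{1}{d_{x}}\sum_{y\sim x}|\sigma_{xy}f(y)-f(x)|^{p-2}(\varphi(y)-\varphi(x))$; $\Gamma_{p,2}^\sigma(f,f)(x)=\frac12\mathscr{L}_{p,f}^\sigma(\Gamma^\sigma_p(f,f))(x)-\Gamma_p^\sigma(f,\Delta_p^\sigma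 f)(x)$. $(G,\sigma)$ satisfies $CD_p^\sigma(K,N)$ if at every $x\in V$, $\Gamma_{p,2}^{\sigma}(f,f)(x)\geq\frac{1}{N}(\Delta_{p}^{\sigma}f(x))^{2}+K(\Gamma^{\sigma}_{p}(f,f)(x))^{\frac{2p-2}{p}}$ for every $f:V\to\mathbb{R}$ with $\sigma_{xy}f(y)-f(x)\neq0$ for every $y\sim x$ ($\frac1N=0$ if $N=\infty$). *)

theory Defs
  imports Complex_Main
begin

definition signed_graph :: "'a set \<Rightarrow> ('a \<Rightarrow> 'a \<Rightarrow> bool) \<Rightarrow> ('a \<Rightarrow> 'a \<Rightarrow> real) \<Rightarrow> bool" where
  "signed_graph V E \<sigma> \<longleftrightarrow>
     finite V \<and> V \<noteq> {} \<and>
     (\<forall>x y. E x y \<longrightarrow> x \<in> V \<and> y \<in> V \<and> x \<noteq> y \<and> E y x) \<and>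
     (\<forall>x y. E x y \<longrightarrow> \<sigma> x y = \<sigma> y x \<and> (\<sigma> x y = 1 \<or> \<sigma> x y = -1)) \<and>
     (\<forall>x\<in>V. \<forall>y\<in>V. E\<^sup>*\<^sup>* x y)"

definition nbrs :: "'a set \<Rightarrow> ('a \<Rightarrow> 'a \<Rightarrow> bool) \<Rightarrow> 'a \<Rightarrow> 'a set" where
  "nbrs V E x = {y \<in> V. E x y}"

definition deg :: "'a set \<Rightarrow> ('a \<Rightarrow> 'a \<Rightarrow> bool) \<Rightarrow> 'a \<Rightarrow> real" where
  "deg V E x = real (card (nbrs V E x))"

definition vol :: "'a set \<Rightarrow> ('a \<Rightarrow> 'a \<Rightarrow> bool) \<Rightarrow> real" where
  "vol V E = (\<Sum>x\<in>V. deg V E x)"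

text \<open>|t|^(p-2) t, which is 0 at t = 0 (note 0 powr a = 0 in Isabelle).\<close>
definition pw :: "real \<Rightarrow> real \<Rightarrow> real" where
  "pw p t = \<bar>t\<bar> powr (p - 2) * t"

definition sDelta :: "'a set \<Rightarrow> ('a \<Rightarrow> 'a \<Rightarrow> bool) \<Rightarrow> ('a \<Rightarrow> 'a \<Rightarrow> real) \<Rightarrow> real
    \<Rightarrow> ('a \<Rightarrow> real) \<Rightarrow> 'a \<Rightarrow> real" where
  "sDelta V E \<sigma> p f x =
     (1 / deg V E x) * (\<Sum>y\<in>nbrs V E x. pw p (\<sigma> x y * f y - f x))"

definition sGamma :: "'a set \<Rightarrow> ('a \<Rightarrow> 'a \<Rightarrow> bool) \<Rightarrow> ('a \<Rightarrow> 'a \<Rightarrow> real) \<Rightarrow> real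
    \<Rightarrow> ('a \<Rightarrow> real) \<Rightarrow> ('a \<Rightarrow> real) \<Rightarrow> 'a \<Rightarrow> real" where
  "sGamma V E \<sigma> p f g x =
     (1 / (2 * deg V E x)) * (\<Sum>y\<in>nbrs V E x.
        \<bar>\<sigma> x y * f y - f x\<bar> powr (p - 2) * (\<sigma> x y * f y - f x) * (\<sigma> x y * g y - g x))"

definition sL :: "'a set \<Rightarrow> ('a \<Rightarrow> 'a \<Rightarrow> bool) \<Rightarrow> ('a \<Rightarrow> 'a \<Rightarrow> real) \<Rightarrow> real
    \<Rightarrow> ('a \<Rightarrow> real) \<Rightarrow> ('a \<Rightarrow> real) \<Rightarrow> 'a \<Rightarrow> real" where
  "sL V E \<sigma> p f \<phi> x =
     (1 / deg V E x) * (\<Sum>y\<in>nbrs V E x. \<bar>\<sigma> x y * f y - f x\<bar> powr (p - 2) * (\<phi> y - \<phi> x))"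

definition sGamma2 :: "'a set \<Rightarrow> ('a \<Rightarrow> 'a \<Rightarrow> bool) \<Rightarrow> ('a \<Rightarrow> 'a \<Rightarrow> real) \<Rightarrow> real
    \<Rightarrow> ('a \<Rightarrow> real) \<Rightarrow> 'a \<Rightarrow> real" where
  "sGamma2 V E \<sigma> p f x =
     (1 / 2) * sL V E \<sigma> p f (sGamma V E \<sigma> p f f) x - sGamma V E \<sigma> p f (sDelta V E \<sigma> p f) x"

definition CDp :: "'a set \<Rightarrow> ('a \<Rightarrow> 'a \<Rightarrow> bool) \<Rightarrow> ('a \<Rightarrow> 'a \<Rightarrow> real) \<Rightarrow> real
    \<Rightarrow> real \<Rightarrow> real \<Rightarrow> bool" where
  "CDp V E \<sigma> p K N \<longleftrightarrow>
     (\<forall>x\<in>V. \<forall>f :: 'a \<Rightarrow> real.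
        (\<forall>y\<in>nbrs V E x. \<sigma> x y * f y - f x \<noteq> 0) \<longrightarrow>
        sGamma2 V E \<sigma> p f x \<ge> (1 / N) * (sDelta V E \<sigma> p f x)\<^sup>2
                                 + K * (sGamma V E \<sigma> p f f x) powr ((2 * p - 2) / p))"

definition is_eigenvalue :: "'a set \<Rightarrow> ('a \<Rightarrow> 'a \<Rightarrow> bool) \<Rightarrow> ('a \<Rightarrow> 'a \<Rightarrow> real) \<Rightarrow> real
    \<Rightarrow> real \<Rightarrow> bool" where
  "is_eigenvalue V E \<sigma> p lam \<longleftrightarrow>
     (\<exists>f :: 'a \<Rightarrow> real. (\<exists>x\<in>V. f x \<noteq> 0) \<and>
        (\<forall>x\<in>V. - sDelta V E \<sigma> p f x = lam * pw p (f x)))"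

definition first_nonzero_eigenvalue :: "'a set \<Rightarrow> ('a \<Rightarrow> 'a \<Rightarrow> bool) \<Rightarrow> ('a \<Rightarrow> 'a \<Rightarrow> real)
    \<Rightarrow> real \<Rightarrow> real \<Rightarrow> bool" where
  "first_nonzero_eigenvalue V E \<sigma> p lam \<longleftrightarrow>
     is_eigenvalue V E \<sigma> p lam \<and> lam \<noteq> 0 \<and>
     (\<forall>mu. is_eigenvalue V E \<sigma> p mu \<and> mu \<noteq> 0 \<longrightarrow> lam \<le> mu)"

end

theory Submission
  imports Defs "HOL-Analysis.Analysis"
begin

text \<open>Multiply the curvature condition at \<open>x\<close> by \<open>d\<^sub>x\<close> and sum over \<open>V\<close>. The \<open>\<Gamma>\<^sub>2\<close> term
  sums to \<open>\<Sum> d\<^sub>x (\<Delta>f)\<^sup>2\<close>: its \<open>L\<close>-part is a sum of an antisymmetric edge function, and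
  \<open>\<Gamma>(f, \<Delta>f)\<close> is summed by parts. For an eigenfunction \<open>f\<close> with eigenvalue \<open>\<lambda> > 0\<close> and
  \<open>q = (2p - 2)/p\<close> this gives \<open>(1 - 1/N) \<lambda>\<^sup>2 \<Sum> d\<^sub>x |f|\<^bsup>2p-2\<^esup> \<ge> K \<Sum> d\<^sub>x \<Gamma>(f)\<^sup>q\<close>.
  Jensen's inequality bounds the right side below by \<open>K vol\<^bsup>1-q\<^esup> (\<lambda> S)\<^sup>q\<close> with
  \<open>S = \<Sum> d\<^sub>x |f|\<^sup>p\<close>, and \<open>|f(x)|\<^sup>p \<le> S\<close> bounds the left side above by \<open>(1 - 1/N) \<lambda>\<^sup>2 S\<^sup>q\<close>;
  cancelling \<open>S\<^sup>q\<close> leaves \<open>\<lambda>\<^bsup>2/p\<^esup> \<ge> NK/(N - 1) vol\<^bsup>1-q\<^esup>\<close>.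
  The curvature condition is only assumed for \<open>f\<close> without vanishing edge differences at \<open>x\<close>;
  it extends to all \<open>f\<close> by perturbing \<open>f\<close> at \<open>x\<close> and passing to the limit.\<close>

lemma convex_on_powr_nonneg:
  fixes q :: real
  assumes "q \<ge> 1"
  shows "convex_on {0..} (\<lambda>x. x powr q)"
proof (rule convex_on_linorderI)
  fix t x y :: real
  assume t: "0 < t" "t < 1" and xy: "x \<in> {0..}" "y \<in> {0..}" "x < y"
  show "((1 - t) *\<^sub>R x + t *\<^sub>R y) powr q \<le> (1 - t) * x powr q + t * y powr q"
  proof (cases "x = 0")
    case True
    have "(t * y) powr q = t powr q * y powr q"
      using t xy by (simp add: powr_mult)
    also have "\<dots> \<le> t * y powr q"
      using t assms by (intro mult_right_mono powr_le_one_le) auto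
    finally show ?thesis using True by simp
  next
    case False
    then show ?thesis
      using convex_onD[OF powr_convex[OF assms], of t x y] t xy by simp
  qed
qed simp

lemma jensen_sum_powr:
  fixes w u :: "'b \<Rightarrow> real"
  assumes "finite A" "\<And>i. i \<in> A \<Longrightarrow> w i \<ge> 0" "\<And>i. i \<in> A \<Longrightarrow> u i \<ge> 0"
    and "q \<ge> 1" and "(\<Sum>i\<in>A. w i) > 0"
  shows "(\<Sum>i\<in>A. w i) powr (1 - q) * (\<Sum>i\<in>A. w i * u i) powr q \<le> (\<Sum>i\<in>A. w i * u i powr q)"
proof -
  define T where "T = (\<Sum>i\<in>A. w i)"
  have T: "T > 0" using assms(5) by (simp add: T_def)
  have "A \<noteq> {}" using T by (auto simp: T_def)
  have "(\<Sum>i\<in>A. (w i / T) *\<^sub>R u i) powr q \<le> (\<Sum>i\<in>A. (w i / T) * u i powr q)"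
    using assms T
    by (intro convex_on_sum[OF assms(1) \<open>A \<noteq> {}\<close> convex_on_powr_nonneg])
      (auto simp: T_def sum_divide_distrib[symmetric])
  then have mean: "((\<Sum>i\<in>A. w i * u i) / T) powr q \<le> (\<Sum>i\<in>A. w i * u i powr q) / T"
    by (simp add: sum_divide_distrib)
  have "T powr (1 - q) * (\<Sum>i\<in>A. w i * u i) powr q = T * ((\<Sum>i\<in>A. w i * u i) / T) powr q"
    using T assms(2,3) by (simp add: powr_divide powr_diff sum_nonneg)
  also have "\<dots> \<le> T * ((\<Sum>i\<in>A. w i * u i powr q) / T)"
    using mean T by (intro mult_left_mono) auto
  also have "\<dots> = (\<Sum>i\<in>A. w i * u i powr q)"
    using T by simp
  finally show ?thesis by (simp add: T_def)
qed

lemma pw_uminus: "pw p (- u) = - pw p u"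
  by (simp add: pw_def)

lemma pw_sign_mult: "s = 1 \<or> s = -1 \<Longrightarrow> pw p (s * u) = s * pw p u"
  by (auto simp: pw_def)

lemma mult_pw_self: "u * pw p u = \<bar>u\<bar> powr p"
proof (cases "u = 0")
  case False
  have "u * pw p u = \<bar>u\<bar> powr (p - 2) * u\<^sup>2"
    by (simp add: pw_def power2_eq_square)
  also have "u\<^sup>2 = \<bar>u\<bar> powr 2"
    using False by (simp add: powr_numeral)
  also have "\<bar>u\<bar> powr (p - 2) * \<bar>u\<bar> powr 2 = \<bar>u\<bar> powr p"
    by (subst powr_add[symmetric]) simp
  finally show ?thesis .
qed (simp add: pw_def)

lemma pw_squared: "(pw p u)\<^sup>2 = \<bar>u\<bar> powr p * \<bar>u\<bar> powr (p - 2)"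
proof -
  have "(pw p u)\<^sup>2 = \<bar>u\<bar> powr (p - 2) * (u * pw p u)"
    by (simp add: power2_eq_square pw_def[of p u])
  then show ?thesis
    by (simp add: mult_pw_self)
qed

section \<open>A continuous version of \<open>\<Gamma>\<^sub>2\<close>\<close>

text \<open>The weight \<open>|u|\<^bsup>p-2\<^esup>\<close> with \<open>0\<^sup>0 = 1\<close>. Because \<open>0 powr 0 = 0\<close>, the operator
  \<open>sL\<close> is discontinuous in \<open>f\<close> for \<open>p = 2\<close>, whereas \<open>sLW\<close> below is continuous.\<close>

definition powr_weight :: "real \<Rightarrow> real \<Rightarrow> real" where
  "powr_weight p u = (if p = 2 then 1 else \<bar>u\<bar> powr (p - 2))"

lemma pw_eq_powr_weight: "pw p u = powr_weight p u * u"
  by (simp add: pw_def powr_weight_def)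

lemma abs_powr_eq_powr_weight: "u \<noteq> 0 \<Longrightarrow> \<bar>u\<bar> powr (p - 2) = powr_weight p u"
  by (simp add: powr_weight_def)

lemma powr_weight_abs [simp]: "powr_weight p \<bar>u\<bar> = powr_weight p u"
  by (simp add: powr_weight_def)

lemma isCont_powr_weight [continuous_intros]:
  fixes g :: "'b::t2_space \<Rightarrow> real"
  assumes "p \<ge> 2" "isCont g t"
  shows "isCont (\<lambda>t. powr_weight p (g t)) t"
proof -
  have "continuous_on UNIV (\<lambda>u. \<bar>u\<bar> powr (p - 2))" if "p \<noteq> 2"
    using assms that by (intro continuous_on_powr') (auto intro!: continuous_intros)
  moreover have "powr_weight p = (\<lambda>u. if p = 2 then 1 else \<bar>u\<bar> powr (p - 2))"
    by (simp add: fun_eq_iff powr_weight_def)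
  ultimately have "isCont (powr_weight p) u" for u
    by (cases "p = 2") (simp_all add: continuous_on_eq_continuous_at)
  then show ?thesis
    using isCont_o2[OF assms(2)] by blast
qed

lemma sDelta_powr_weight:
  "sDelta V E \<sigma> p f x = (1 / deg V E x) *
     (\<Sum>y\<in>nbrs V E x. powr_weight p (\<sigma> x y * f y - f x) * (\<sigma> x y * f y - f x))"
  by (simp add: sDelta_def pw_eq_powr_weight)

lemma sGamma_powr_weight:
  "sGamma V E \<sigma> p f g x = (1 / (2 * deg V E x)) * (\<Sum>y\<in>nbrs V E x.
     powr_weight p (\<sigma> x y * f y - f x) * (\<sigma> x y * f y - f x) * (\<sigma> x y * g y - g x))"
  unfolding sGamma_def by (metis pw_def pw_eq_powr_weight)

definition sLW :: "'a set \<Rightarrow> ('a \<Rightarrow> 'a \<Rightarrow> bool) \<Rightarrow> ('a \<Rightarrow> 'a \<Rightarrow> real) \<Rightarrow> real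
    \<Rightarrow> ('a \<Rightarrow> real) \<Rightarrow> ('a \<Rightarrow> real) \<Rightarrow> 'a \<Rightarrow> real" where
  "sLW V E \<sigma> p f \<phi> x =
     (1 / deg V E x) * (\<Sum>y\<in>nbrs V E x. powr_weight p (\<sigma> x y * f y - f x) * (\<phi> y - \<phi> x))"

definition sGamma2W :: "'a set \<Rightarrow> ('a \<Rightarrow> 'a \<Rightarrow> bool) \<Rightarrow> ('a \<Rightarrow> 'a \<Rightarrow> real) \<Rightarrow> real
    \<Rightarrow> ('a \<Rightarrow> real) \<Rightarrow> 'a \<Rightarrow> real" where
  "sGamma2W V E \<sigma> p f x =
     (1 / 2) * sLW V E \<sigma> p f (sGamma V E \<sigma> p f f) x - sGamma V E \<sigma> p f (sDelta V E \<sigma> p f) x"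

lemma sGamma2_eq_sGamma2W:
  assumes "\<forall>y\<in>nbrs V E x. \<sigma> x y * f y - f x \<noteq> 0"
  shows "sGamma2 V E \<sigma> p f x = sGamma2W V E \<sigma> p f x"
  using assms unfolding sGamma2_def sGamma2W_def sL_def sLW_def
  by (simp add: abs_powr_eq_powr_weight)

lemma isCont_sDelta:
  assumes "p \<ge> 2" "\<And>z. isCont (\<lambda>t. f t z) t0"
  shows "isCont (\<lambda>t. sDelta V E \<sigma> p (f t) x) t0"
  unfolding sDelta_powr_weight by (intro continuous_intros assms)

lemma isCont_sGamma:
  assumes "p \<ge> 2" "\<And>z. isCont (\<lambda>t. f t z) t0" "\<And>z. isCont (\<lambda>t. g t z) t0"
  shows "isCont (\<lambda>t. sGamma V E \<sigma> p (f t) (g t) x) t0"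
  unfolding sGamma_powr_weight by (intro continuous_intros assms)

lemma isCont_sLW:
  assumes "p \<ge> 2" "\<And>z. isCont (\<lambda>t. f t z) t0" "\<And>z. isCont (\<lambda>t. \<phi> t z) t0"
  shows "isCont (\<lambda>t. sLW V E \<sigma> p (f t) (\<phi> t) x) t0"
  unfolding sLW_def by (intro continuous_intros assms)

lemma isCont_sGamma2W:
  assumes "p \<ge> 2" "\<And>z. isCont (\<lambda>t. f t z) t0"
  shows "isCont (\<lambda>t. sGamma2W V E \<sigma> p (f t) x) t0"
  unfolding sGamma2W_def
  by (intro continuous_intros isCont_sLW isCont_sGamma isCont_sDelta assms)

section \<open>Summation over a signed graph\<close>

lemma finite_nbrs: "signed_graph V E \<sigma> \<Longrightarrow> finite (nbrs V E x)"
  by (simp add: signed_graph_def nbrs_def)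

lemma deg_nonneg: "deg V E x \<ge> 0"
  by (simp add: deg_def)

lemma deg_eq_0_iff: "signed_graph V E \<sigma> \<Longrightarrow> deg V E x = 0 \<longleftrightarrow> nbrs V E x = {}"
  by (simp add: deg_def finite_nbrs)

lemma deg_ge_1: "signed_graph V E \<sigma> \<Longrightarrow> nbrs V E x \<noteq> {} \<Longrightarrow> deg V E x \<ge> 1"
  by (simp add: deg_def finite_nbrs Suc_leI card_gt_0_iff)

lemma sign_edge: "signed_graph V E \<sigma> \<Longrightarrow> y \<in> nbrs V E x \<Longrightarrow> \<sigma> x y = 1 \<or> \<sigma> x y = -1"
  by (simp add: signed_graph_def nbrs_def)

lemma sign_edge_sym: "signed_graph V E \<sigma> \<Longrightarrow> y \<in> nbrs V E x \<Longrightarrow> \<sigma> y x = \<sigma> x y"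
  by (simp add: signed_graph_def nbrs_def)

lemma edge_diff_reverse:
  assumes "signed_graph V E \<sigma>" "y \<in> nbrs V E x"
  shows "\<sigma> y x * f x - f y = - \<sigma> x y * (\<sigma> x y * f y - f x)"
  using sign_edge[OF assms] sign_edge_sym[OF assms] by auto

lemma sum_nbrs_swap:
  assumes "signed_graph V E \<sigma>"
  shows "(\<Sum>x\<in>V. \<Sum>y\<in>nbrs V E x. F x y) = (\<Sum>x\<in>V. \<Sum>y\<in>nbrs V E x. F y x)"
proof -
  have "finite V" "\<And>x y. E x y \<longleftrightarrow> E y x" "\<And>x y. E x y \<Longrightarrow> x \<in> V"
    using assms by (auto simp: signed_graph_def)
  then show ?thesis
    unfolding nbrs_def using sum.swap_restrict[of V V F E] by auto
qed

lemma sum_nbrs_antisym: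
  fixes F :: "'a \<Rightarrow> 'a \<Rightarrow> real"
  assumes "signed_graph V E \<sigma>" "\<And>x y. y \<in> nbrs V E x \<Longrightarrow> F y x = - F x y"
  shows "(\<Sum>x\<in>V. \<Sum>y\<in>nbrs V E x. F x y) = 0"
proof -
  have "(\<Sum>x\<in>V. \<Sum>y\<in>nbrs V E x. F x y) = (\<Sum>x\<in>V. \<Sum>y\<in>nbrs V E x. F y x)"
    using assms(1) by (rule sum_nbrs_swap)
  also have "\<dots> = - (\<Sum>x\<in>V. \<Sum>y\<in>nbrs V E x. F x y)"
    by (simp add: assms(2) sum_negf)
  finally show ?thesis by simp
qed

lemma deg_sDelta:
  "signed_graph V E \<sigma> \<Longrightarrow>
     deg V E x * sDelta V E \<sigma> p f x = (\<Sum>y\<in>nbrs V E x. pw p (\<sigma> x y * f y - f x))"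
  by (cases "deg V E x = 0") (simp_all add: sDelta_def deg_eq_0_iff)

lemma deg_sGamma:
  "signed_graph V E \<sigma> \<Longrightarrow> deg V E x * sGamma V E \<sigma> p f g x =
     1 / 2 * (\<Sum>y\<in>nbrs V E x. pw p (\<sigma> x y * f y - f x) * (\<sigma> x y * g y - g x))"
  by (cases "deg V E x = 0") (simp_all add: sGamma_def pw_def deg_eq_0_iff)

lemma deg_sLW:
  "signed_graph V E \<sigma> \<Longrightarrow> deg V E x * sLW V E \<sigma> p f \<phi> x =
     (\<Sum>y\<in>nbrs V E x. powr_weight p (\<sigma> x y * f y - f x) * (\<phi> y - \<phi> x))"
  by (cases "deg V E x = 0") (simp_all add: sLW_def deg_eq_0_iff)

lemma sum_deg_sLW:
  assumes G: "signed_graph V E \<sigma>"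
  shows "(\<Sum>x\<in>V. deg V E x * sLW V E \<sigma> p f \<phi> x) = 0"
  unfolding deg_sLW[OF G]
proof (rule sum_nbrs_antisym[OF G])
  fix x y assume xy: "y \<in> nbrs V E x"
  have "\<bar>\<sigma> y x * f x - f y\<bar> = \<bar>\<sigma> x y * f y - f x\<bar>"
    using edge_diff_reverse[OF G xy] sign_edge[OF G xy] by auto
  then have "powr_weight p (\<sigma> y x * f x - f y) = powr_weight p (\<sigma> x y * f y - f x)"
    by (metis powr_weight_abs)
  then show "powr_weight p (\<sigma> y x * f x - f y) * (\<phi> x - \<phi> y)
      = - (powr_weight p (\<sigma> x y * f y - f x) * (\<phi> y - \<phi> x))"
    by (simp add: algebra_simps)
qed

lemma sum_deg_sGamma:
  assumes G: "signed_graph V E \<sigma>"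
  shows "(\<Sum>x\<in>V. deg V E x * sGamma V E \<sigma> p f g x)
       = - (\<Sum>x\<in>V. g x * (deg V E x * sDelta V E \<sigma> p f x))"
proof -
  define a where "a x y = pw p (\<sigma> x y * f y - f x)" for x y
  have antisym: "(\<Sum>x\<in>V. \<Sum>y\<in>nbrs V E x. a x y * (\<sigma> x y * g y) + a x y * g x) = 0"
  proof (rule sum_nbrs_antisym[OF G])
    fix x y assume xy: "y \<in> nbrs V E x"
    have "a y x = - \<sigma> x y * a x y"
      unfolding a_def edge_diff_reverse[OF G xy] mult_minus_left pw_uminus
      using pw_sign_mult[OF sign_edge[OF G xy]] by simp
    moreover have "\<sigma> x y * \<sigma> x y = 1"
      using sign_edge[OF G xy] by auto
    ultimately show "a y x * (\<sigma> y x * g x) + a y x * g y = - (a x y * (\<sigma> x y * g y) + a x y * g x)"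
      by (simp add: sign_edge_sym[OF G xy] algebra_simps)
  qed
  have "(\<Sum>x\<in>V. deg V E x * sGamma V E \<sigma> p f g x)
      = 1 / 2 * (\<Sum>x\<in>V. \<Sum>y\<in>nbrs V E x. a x y * (\<sigma> x y * g y - g x))"
    by (simp add: deg_sGamma[OF G] a_def sum_distrib_left)
  also have "\<dots> = 1 / 2 * (\<Sum>x\<in>V. \<Sum>y\<in>nbrs V E x.
      (a x y * (\<sigma> x y * g y) + a x y * g x) - 2 * (a x y * g x))"
    by (intro arg_cong[where f = "(*) (1 / 2)"] sum.cong refl) (simp add: algebra_simps)
  also have "\<dots> = 1 / 2 * ((\<Sum>x\<in>V. \<Sum>y\<in>nbrs V E x. a x y * (\<sigma> x y * g y) + a x y * g x)
      - 2 * (\<Sum>x\<in>V. \<Sum>y\<in>nbrs V E x. a x y * g x))"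
    by (simp only: sum_subtractf sum_distrib_left)
  also have "\<dots> = - (\<Sum>x\<in>V. \<Sum>y\<in>nbrs V E x. a x y * g x)"
    by (simp add: antisym)
  also have "\<dots> = - (\<Sum>x\<in>V. g x * (deg V E x * sDelta V E \<sigma> p f x))"
    by (simp add: deg_sDelta[OF G] a_def sum_distrib_left mult.commute)
  finally show ?thesis .
qed

lemma sum_deg_sGamma2W:
  assumes G: "signed_graph V E \<sigma>"
  shows "(\<Sum>x\<in>V. deg V E x * sGamma2W V E \<sigma> p f x)
       = (\<Sum>x\<in>V. deg V E x * (sDelta V E \<sigma> p f x)\<^sup>2)"
proof -
  have "(\<Sum>x\<in>V. deg V E x * sGamma2W V E \<sigma> p f x)
      = 1 / 2 * (\<Sum>x\<in>V. deg V E x * sLW V E \<sigma> p f (sGamma V E \<sigma> p f f) x)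
        - (\<Sum>x\<in>V. deg V E x * sGamma V E \<sigma> p f (sDelta V E \<sigma> p f) x)"
    by (simp add: sGamma2W_def right_diff_distrib sum_subtractf sum_distrib_left mult.left_commute)
  also have "\<dots> = (\<Sum>x\<in>V. sDelta V E \<sigma> p f x * (deg V E x * sDelta V E \<sigma> p f x))"
    by (simp add: sum_deg_sLW[OF G] sum_deg_sGamma[OF G])
  finally show ?thesis
    by (simp add: power2_eq_square mult.left_commute)
qed

section \<open>Extending the curvature condition\<close>

lemma sGamma_nonneg: "sGamma V E \<sigma> p f f x \<ge> 0"
  unfolding sGamma_def
  by (intro mult_nonneg_nonneg[of "1 / _"] sum_nonneg)
    (simp_all add: deg_def mult.assoc)

lemma CDp_imp_sGamma2W_bound:
  assumes G: "signed_graph V E \<sigma>" and CD: "CDp V E \<sigma> p K N" and p: "p \<ge> 2" and x: "x \<in> V"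
  shows "(1 / N) * (sDelta V E \<sigma> p f x)\<^sup>2 + K * (sGamma V E \<sigma> p f f x) powr ((2 * p - 2) / p)
    \<le> sGamma2W V E \<sigma> p f x"
proof -
  define g where "g t = f(x := f x + t)" for t :: real
  define F where "F t = sGamma2W V E \<sigma> p (g t) x - ((1 / N) * (sDelta V E \<sigma> p (g t) x)\<^sup>2
    + K * (sGamma V E \<sigma> p (g t) (g t) x) powr ((2 * p - 2) / p))" for t
  have "\<forall>\<^sub>F t in at_right 0. \<forall>y\<in>nbrs V E x. \<sigma> x y * g t y - g t x \<noteq> 0"
  proof (rule eventually_ball_finite[OF finite_nbrs[OF G]], rule ballI)
    fix y assume "y \<in> nbrs V E x"
    then have "y \<noteq> x" using G by (auto simp: signed_graph_def nbrs_def)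
    show "\<forall>\<^sub>F t in at_right 0. \<sigma> x y * g t y - g t x \<noteq> 0"
      using eventually_neq_at_within[of "\<sigma> x y * f y - f x" 0 "{0<..}"]
      by eventually_elim (auto simp: g_def \<open>y \<noteq> x\<close>)
  qed
  then have "\<forall>\<^sub>F t in at_right 0. F t \<ge> 0"
  proof eventually_elim
    case (elim t)
    with CD x have "(1 / N) * (sDelta V E \<sigma> p (g t) x)\<^sup>2
        + K * (sGamma V E \<sigma> p (g t) (g t) x) powr ((2 * p - 2) / p) \<le> sGamma2 V E \<sigma> p (g t) x"
      unfolding CDp_def by blast
    with elim show ?case by (simp add: F_def sGamma2_eq_sGamma2W)
  qed
  moreover have "(F \<longlongrightarrow> F 0) (at_right 0)"
  proof -
    have cont: "isCont (\<lambda>t. g t z) t0" for z t0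
      by (cases "z = x") (simp_all add: g_def)
    have lim: "(u \<longlongrightarrow> u 0) (at_right 0)" if "isCont u 0" for u :: "real \<Rightarrow> real"
      using that unfolding isCont_def by (rule tendsto_mono[OF at_le, rotated]) simp
    show ?thesis
      unfolding F_def using p
      by (intro tendsto_intros lim isCont_sGamma2W isCont_sDelta isCont_sGamma cont)
        (auto simp: sGamma_nonneg)
  qed
  ultimately have "F 0 \<ge> 0"
    by (intro tendsto_lowerbound) auto
  then show ?thesis
    by (simp add: F_def g_def)
qed

lemma CDp_sum_deg:
  assumes G: "signed_graph V E \<sigma>" and CD: "CDp V E \<sigma> p K N" and p: "p \<ge> 2"
  shows "(1 / N) * (\<Sum>x\<in>V. deg V E x * (sDelta V E \<sigma> p f x)\<^sup>2)
      + K * (\<Sum>x\<in>V. deg V E x * (sGamma V E \<sigma> p f f x) powr ((2 * p - 2) / p))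
    \<le> (\<Sum>x\<in>V. deg V E x * (sDelta V E \<sigma> p f x)\<^sup>2)"
proof -
  have "(1 / N) * (\<Sum>x\<in>V. deg V E x * (sDelta V E \<sigma> p f x)\<^sup>2)
      + K * (\<Sum>x\<in>V. deg V E x * (sGamma V E \<sigma> p f f x) powr ((2 * p - 2) / p))
    = (\<Sum>x\<in>V. deg V E x * ((1 / N) * (sDelta V E \<sigma> p f x)\<^sup>2
      + K * (sGamma V E \<sigma> p f f x) powr ((2 * p - 2) / p)))"
    by (simp add: sum.distrib sum_distrib_left algebra_simps)
  also have "\<dots> \<le> (\<Sum>x\<in>V. deg V E x * sGamma2W V E \<sigma> p f x)"
    by (intro sum_mono mult_left_mono deg_nonneg CDp_imp_sGamma2W_bound[OF G CD p])
  also have "\<dots> = (\<Sum>x\<in>V. deg V E x * (sDelta V E \<sigma> p f x)\<^sup>2)"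
    by (rule sum_deg_sGamma2W[OF G])
  finally show ?thesis .
qed

definition eigenfunction :: "'a set \<Rightarrow> ('a \<Rightarrow> 'a \<Rightarrow> bool) \<Rightarrow> ('a \<Rightarrow> 'a \<Rightarrow> real) \<Rightarrow> real
    \<Rightarrow> real \<Rightarrow> ('a \<Rightarrow> real) \<Rightarrow> bool" where
  "eigenfunction V E \<sigma> p lam f \<longleftrightarrow>
     (\<exists>x\<in>V. f x \<noteq> 0) \<and> (\<forall>x\<in>V. - sDelta V E \<sigma> p f x = lam * pw p (f x))"

lemma is_eigenvalue_iff: "is_eigenvalue V E \<sigma> p lam \<longleftrightarrow> (\<exists>f. eigenfunction V E \<sigma> p lam f)"
  by (simp add: is_eigenvalue_def eigenfunction_def)

lemma eigenfunction_sDelta: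
  "eigenfunction V E \<sigma> p lam f \<Longrightarrow> x \<in> V \<Longrightarrow> sDelta V E \<sigma> p f x = - lam * pw p (f x)"
  unfolding eigenfunction_def by (metis minus_minus mult_minus_left)

lemma sum_deg_sDelta_sq_eigenfunction:
  "eigenfunction V E \<sigma> p lam f \<Longrightarrow>
     (\<Sum>x\<in>V. deg V E x * (sDelta V E \<sigma> p f x)\<^sup>2) = lam\<^sup>2 * (\<Sum>x\<in>V. deg V E x * (pw p (f x))\<^sup>2)"
  by (simp add: sum_distrib_left eigenfunction_sDelta power_mult_distrib mult.left_commute
      cong: sum.cong)

lemma sum_deg_sGamma_eigenfunction:
  assumes G: "signed_graph V E \<sigma>" and f: "eigenfunction V E \<sigma> p lam f"
  shows "(\<Sum>x\<in>V. deg V E x * sGamma V E \<sigma> p f f x) = lam * (\<Sum>x\<in>V. deg V E x * \<bar>f x\<bar> powr p)"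
  unfolding sum_deg_sGamma[OF G] sum_distrib_left sum_negf[symmetric]
  by (intro sum.cong refl) (simp add: eigenfunction_sDelta[OF f] mult_pw_self[symmetric] algebra_simps)

lemma sum_deg_pos:
  assumes G: "signed_graph V E \<sigma>" and "x \<in> V" "nbrs V E x \<noteq> {}" "u x > 0" "\<And>y. y \<in> V \<Longrightarrow> u y \<ge> 0"
  shows "(\<Sum>y\<in>V. deg V E y * u y) > 0"
proof -
  have "0 < deg V E x * u x"
    using deg_ge_1[OF G assms(3)] assms(4) by simp
  also have "\<dots> \<le> (\<Sum>y\<in>V. deg V E y * u y)"
    using G assms(2,5) by (intro member_le_sum mult_nonneg_nonneg deg_nonneg) (auto simp: signed_graph_def)
  finally show ?thesis .
qed

lemma eigenfunction_nonzero_at_nonisolated_vertex: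
  assumes f: "eigenfunction V E \<sigma> p lam f" and "lam \<noteq> 0"
  obtains x where "x \<in> V" "f x \<noteq> 0" "nbrs V E x \<noteq> {}"
proof -
  obtain x where x: "x \<in> V" "f x \<noteq> 0"
    using f by (auto simp: eigenfunction_def)
  have "pw p (f x) \<noteq> 0"
    using x(2) by (simp add: pw_def)
  then have "sDelta V E \<sigma> p f x \<noteq> 0"
    using eigenfunction_sDelta[OF f x(1)] \<open>lam \<noteq> 0\<close> by simp
  then have "nbrs V E x \<noteq> {}"
    by (auto simp: sDelta_def)
  with x that show thesis by blast
qed

lemma nonzero_eigenvalue_pos:
  assumes G: "signed_graph V E \<sigma>" and f: "eigenfunction V E \<sigma> p lam f" and "lam \<noteq> 0"
  shows "lam > 0"
proof -
  obtain x where "x \<in> V" "f x \<noteq> 0" "nbrs V E x \<noteq> {}"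
    using eigenfunction_nonzero_at_nonisolated_vertex[OF f \<open>lam \<noteq> 0\<close>] .
  then have "(\<Sum>y\<in>V. deg V E y * \<bar>f y\<bar> powr p) > 0"
    by (intro sum_deg_pos[OF G]) auto
  moreover have "lam * (\<Sum>y\<in>V. deg V E y * \<bar>f y\<bar> powr p) \<ge> 0"
    unfolding sum_deg_sGamma_eigenfunction[OF G f, symmetric]
    by (intro sum_nonneg mult_nonneg_nonneg deg_nonneg sGamma_nonneg)
  ultimately show ?thesis
    using \<open>lam \<noteq> 0\<close> by (simp add: zero_le_mult_iff)
qed

lemma sum_deg_pw_squared_le:
  assumes G: "signed_graph V E \<sigma>" and p: "p \<ge> 2"
  shows "(\<Sum>x\<in>V. deg V E x * (pw p (f x))\<^sup>2)
    \<le> (\<Sum>x\<in>V. deg V E x * \<bar>f x\<bar> powr p) powr ((2 * p - 2) / p)"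
proof -
  define S where "S = (\<Sum>x\<in>V. deg V E x * \<bar>f x\<bar> powr p)"
  have fin: "finite V"
    using G by (simp add: signed_graph_def)
  have "(\<Sum>x\<in>V. deg V E x * (pw p (f x))\<^sup>2) \<le> (\<Sum>x\<in>V. deg V E x * \<bar>f x\<bar> powr p * S powr ((p - 2) / p))"
  proof (rule sum_mono)
    fix x assume x: "x \<in> V"
    show "deg V E x * (pw p (f x))\<^sup>2 \<le> deg V E x * \<bar>f x\<bar> powr p * S powr ((p - 2) / p)"
    proof (cases "nbrs V E x = {}")
      case False
      have "\<bar>f x\<bar> powr p \<le> deg V E x * \<bar>f x\<bar> powr p"
        using mult_right_mono[OF deg_ge_1[OF G False], of "\<bar>f x\<bar> powr p"] by simp
      also have "\<dots> \<le> S"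
        unfolding S_def using fin x by (intro member_le_sum mult_nonneg_nonneg deg_nonneg) auto
      finally have "(\<bar>f x\<bar> powr p) powr ((p - 2) / p) \<le> S powr ((p - 2) / p)"
        using p by (intro powr_mono2) auto
      then have "\<bar>f x\<bar> powr (p - 2) \<le> S powr ((p - 2) / p)"
        using p by (simp add: powr_powr)
      then show ?thesis
        unfolding pw_squared mult.assoc by (intro mult_left_mono deg_nonneg) simp_all
    qed (simp add: deg_def)
  qed
  also have "\<dots> = S powr 1 * S powr ((p - 2) / p)"
    by (simp add: S_def sum_distrib_right sum_nonneg deg_nonneg)
  also have "\<dots> = S powr ((2 * p - 2) / p)"
  proof -
    have "1 + (p - 2) / p = (2 * p - 2) / p"
      using p by (simp add: field_simps)
    then show ?thesis
      by (simp only: powr_add[symmetric])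
  qed
  finally show ?thesis
    by (simp add: S_def)
qed

lemma lower_bound_from_powr_inequality:
  fixes lam v K N p :: real
  assumes "lam > 0" "v > 0" "K > 0" "N > 1" "p \<ge> 2"
    and ineq: "K * v powr (1 - (2 * p - 2) / p) * lam powr ((2 * p - 2) / p) \<le> (1 - 1 / N) * lam\<^sup>2"
  shows "lam \<ge> (1 / v) powr ((p - 2) / 2) * (N * K / (N - 1)) powr (p / 2)"
proof -
  define C where "C = N * K / (N - 1)"
  have C: "C > 0"
    using assms by (simp add: C_def)
  have "lam\<^sup>2 = lam powr ((2 * p - 2) / p) * lam powr (2 / p)"
    using assms by (simp add: powr_numeral flip: powr_add) (simp add: field_simps)
  then have "K * v powr (1 - (2 * p - 2) / p) \<le> (1 - 1 / N) * lam powr (2 / p)"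
    using ineq \<open>lam > 0\<close> by (simp add: mult.commute mult.left_commute)
  then have bound: "C * v powr ((2 - p) / p) \<le> lam powr (2 / p)"
    using assms by (simp add: C_def field_simps)
  have "(2 - p) / p * (p / 2) = - ((p - 2) / 2)"
    using assms by (simp add: field_simps)
  then have "(1 / v) powr ((p - 2) / 2) = v powr ((2 - p) / p * (p / 2))"
    using assms by (simp only: powr_minus_divide powr_divide[of 1 v] powr_one_eq_one)
  then have "(1 / v) powr ((p - 2) / 2) * C powr (p / 2) = (C * v powr ((2 - p) / p)) powr (p / 2)"
    using C assms by (simp add: powr_mult powr_powr)
  also have "\<dots> \<le> (lam powr (2 / p)) powr (p / 2)"
    using bound C assms by (intro powr_mono2) auto
  also have "\<dots> = lam"
    using assms by (simp add: powr_powr)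
  finally show ?thesis
    by (simp add: C_def)
qed

theorem theorem4p10:
  fixes V :: "'a set" and E :: "'a \<Rightarrow> 'a \<Rightarrow> bool" and \<sigma> :: "'a \<Rightarrow> 'a \<Rightarrow> real"
    and p K N lam :: real
  assumes "signed_graph V E \<sigma>"
    and "CDp V E \<sigma> p K N"
    and "p \<ge> 2" and "N > 1" and "K > 0"
    and "first_nonzero_eigenvalue V E \<sigma> p lam"
  shows "lam \<ge> (1 / vol V E) powr ((p - 2) / 2) * (N * K / (N - 1)) powr (p / 2)"
proof -
  note G = assms(1) and p = assms(3)
  obtain f where f: "eigenfunction V E \<sigma> p lam f" and "lam \<noteq> 0"
    using assms(6) by (auto simp: first_nonzero_eigenvalue_def is_eigenvalue_iff)
  define q where "q = (2 * p - 2) / p"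
  define S where "S = (\<Sum>x\<in>V. deg V E x * \<bar>f x\<bar> powr p)"
  define P where "P = (\<Sum>x\<in>V. deg V E x * (pw p (f x))\<^sup>2)"
  define Q where "Q = (\<Sum>x\<in>V. deg V E x * (sGamma V E \<sigma> p f f x) powr q)"
  have lam: "lam > 0"
    using nonzero_eigenvalue_pos[OF G f \<open>lam \<noteq> 0\<close>] .
  obtain x where "x \<in> V" "f x \<noteq> 0" "nbrs V E x \<noteq> {}"
    using eigenfunction_nonzero_at_nonisolated_vertex[OF f \<open>lam \<noteq> 0\<close>] .
  then have "S > 0"
    unfolding S_def by (intro sum_deg_pos[OF G]) auto
  have vol: "vol V E > 0"
    using sum_deg_pos[OF G \<open>x \<in> V\<close> \<open>nbrs V E x \<noteq> {}\<close>, of "\<lambda>_. 1"] by (simp add: vol_def)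
  have "K * (vol V E powr (1 - q) * (lam * S) powr q) \<le> K * Q"
    using jensen_sum_powr[of V "deg V E" "sGamma V E \<sigma> p f f" q] G p vol assms(5)
    by (simp add: Q_def q_def vol_def sum_deg_sGamma_eigenfunction[OF G f, folded S_def]
        deg_nonneg sGamma_nonneg signed_graph_def field_simps)
  also have "\<dots> \<le> (1 - 1 / N) * lam\<^sup>2 * P"
    using CDp_sum_deg[OF G assms(2) p, of f] sum_deg_sDelta_sq_eigenfunction[OF f]
    by (simp add: P_def Q_def q_def algebra_simps)
  also have "\<dots> \<le> (1 - 1 / N) * lam\<^sup>2 * S powr q"
    using sum_deg_pw_squared_le[OF G p, of f] assms(4)
    by (intro mult_left_mono) (simp_all add: P_def S_def q_def)
  finally have "K * vol V E powr (1 - q) * lam powr q \<le> (1 - 1 / N) * lam\<^sup>2"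
    using lam \<open>S > 0\<close> by (simp add: powr_mult mult.assoc)
  then show ?thesis
    using lower_bound_from_powr_inequality[OF lam vol assms(5,4) p] by (simp add: q_def)
qed

end
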